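(* Let $p\ge 1$, $\varepsilon>0$ and integers $k,l\ge 1$. There exists an integer $N\ge 1$ such that for every linear subspace $F$ of $\ell_p^N$ with $\dim F\ge N-k$, there exist $l$ vectors $y_1,\dots,y_l\in\ell_p^N$ of norm one, with pairwise disjoint supports, such that $\operatorname{dist}(y_j,F)\le\varepsilon$ for $1\le j\le l$.
   Context: $\ell_p^N$ is $\mathbb{R}^N$ with the norm $\|x\|_p=(\sum_{i=1}^N|x_i|^p)^{1/p}$; the support of $x$ is $\{i: x_i\neq 0\}$; distances are measured in $\|\cdot\|_p$. *)

theory Defs
  imports "HOL-Analysis.Analysis" "HOL-Library.Function_Algebras"
begin

text \<open>Vectors of \<open>\<real>^N\<close> are represented as functions \<open>nat \<Rightarrow> real\<close> vanishing at all
  indices \<open>\<ge> N\<close>; coordinates are indexed by \<open>{..<N}\<close>.\<close>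

definition vecs :: "nat \<Rightarrow> (nat \<Rightarrow> real) set" where
  "vecs N = {x. \<forall>i\<ge>N. x i = 0}"

definition fscale :: "real \<Rightarrow> (nat \<Rightarrow> real) \<Rightarrow> (nat \<Rightarrow> real)" where
  "fscale c x = (\<lambda>i. c * x i)"

definition lp_norm :: "real \<Rightarrow> nat \<Rightarrow> (nat \<Rightarrow> real) \<Rightarrow> real" where
  "lp_norm p N x = (\<Sum>i<N. \<bar>x i\<bar> powr p) powr (1 / p)"

definition supp :: "nat \<Rightarrow> (nat \<Rightarrow> real) \<Rightarrow> nat set" where
  "supp N x = {i. i < N \<and> x i \<noteq> 0}"

definition lp_dist :: "real \<Rightarrow> nat \<Rightarrow> (nat \<Rightarrow> real) \<Rightarrow> (nat \<Rightarrow> real) set \<Rightarrow> real" where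
  "lp_dist p N y F = (INF z\<in>F. lp_norm p N (y - z))"

lemma vector_space_fscale: "vector_space fscale"
  unfolding fscale_def by unfold_locales (auto simp: algebra_simps fun_eq_iff)

end

theory Submission
  imports Defs
begin

text \<open>Take \<open>N = l (k + 1)\<close> and split the coordinates into \<open>l\<close> consecutive blocks of
  \<open>k + 1\<close> coordinates. A subspace \<open>F\<close> of codimension at most \<open>k\<close> meets the coordinate
  subspace of each block nontrivially, because their dimensions add up to more than \<open>N\<close>.
  Normalising a nonzero vector of each intersection gives \<open>l\<close> norm-one vectors with disjoint
  supports that lie in \<open>F\<close> itself, so their distance to \<open>F\<close> is \<open>0\<close>.\<close>

interpretation vs: vector_space fscale
  by (rule vector_space_fscale)

lemma sum_fun_apply: "(\<Sum>v\<in>S. f v) i = (\<Sum>v\<in>S. f v i)"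
  by (induction S rule: infinite_finite_induct) auto

definition basis_vec :: "nat \<Rightarrow> nat \<Rightarrow> real" where
  "basis_vec i = (\<lambda>j. if j = i then 1 else 0)"

lemma inj_basis_vec: "inj basis_vec"
  by (rule injI) (metis basis_vec_def zero_neq_one)

lemma in_span_basis_vecs:
  assumes "finite S" and "\<And>i. i \<notin> S \<Longrightarrow> x i = 0"
  shows "x \<in> vs.span (basis_vec ` S)"
proof -
  have "x = (\<Sum>i\<in>S. fscale (x i) (basis_vec i))"
    using assms by (auto simp: sum_fun_apply fscale_def basis_vec_def if_distrib cong: if_cong)
  also have "\<dots> \<in> vs.span (basis_vec ` S)"
    by (intro vs.span_sum vs.span_scale vs.span_base) auto
  finally show ?thesis .
qed

lemma independent_card_le_card_support:
  assumes "vs.independent A" and "finite S"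
    and "\<And>x i. x \<in> A \<Longrightarrow> i \<notin> S \<Longrightarrow> x i = 0"
  shows "card A \<le> card S"
proof -
  have "A \<subseteq> vs.span (basis_vec ` S)"
    using assms(2,3) in_span_basis_vecs by blast
  then have "card A \<le> card (basis_vec ` S)"
    using vs.independent_span_bound assms(1,2) by blast
  also have "\<dots> = card S"
    using inj_on_subset[OF inj_basis_vec] by (simp add: card_image)
  finally show ?thesis .
qed

lemma subspace_meets_coordinate_subspace:
  assumes "F \<subseteq> vecs N" and "vs.subspace F" and "B \<subseteq> {..<N}"
    and "N < vs.dim F + card B"
  shows "\<exists>x\<in>F. x \<noteq> 0 \<and> (\<forall>i. i \<notin> B \<longrightarrow> x i = 0)"
proof (rule ccontr)
  assume none: "\<not> ?thesis"
  txt \<open>Zeroing the coordinates in \<open>B\<close> is injective on \<open>F\<close>, so it maps a basis of \<open>F\<close>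
    to an independent family supported in \<open>{..<N} - B\<close>.\<close>
  define P where "P x = (\<lambda>i. if i \<in> B then 0 else x i)" for x :: "nat \<Rightarrow> real"
  have hom: "module_hom fscale fscale P"
    by (simp add: module_hom_iff vs.module_axioms P_def fscale_def fun_eq_iff)
  have "inj_on P F"
    using none by (simp add: module_hom.inj_on_iff_eq_0[OF hom assms(2)]) (auto simp: P_def fun_eq_iff)
  obtain A where A: "A \<subseteq> F" "vs.independent A" "card A = vs.dim F"
    using vs.basis_exists[of F] by metis
  have "vs.span A \<subseteq> F"
    using A(1) assms(2) vs.span_minimal by blast
  then have "vs.independent (P ` A)"
    using module_hom.independent_injective_image[OF hom A(2)] \<open>inj_on P F\<close> inj_on_subset by blast
  have "vs.dim F = card (P ` A)"
    using A(1,3) \<open>inj_on P F\<close> by (simp add: card_image inj_on_subset)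
  also have "\<dots> \<le> card ({..<N} - B)"
    using A(1) assms(1) \<open>vs.independent (P ` A)\<close>
    by (intro independent_card_le_card_support) (auto simp: P_def vecs_def)
  also have "\<dots> = N - card B"
    using assms(3) by (simp add: card_Diff_subset finite_subset)
  finally show False
    using assms(3,4) card_mono[OF finite_lessThan assms(3)] by simp
qed

lemma lp_norm_fscale:
  assumes "p \<noteq> 0"
  shows "lp_norm p N (fscale c x) = \<bar>c\<bar> * lp_norm p N x"
proof -
  have "(\<Sum>i<N. \<bar>fscale c x i\<bar> powr p) = \<bar>c\<bar> powr p * (\<Sum>i<N. \<bar>x i\<bar> powr p)"
    by (simp add: fscale_def abs_mult powr_mult sum_distrib_left)
  then show ?thesis
    using assms by (simp add: lp_norm_def powr_mult powr_powr sum_nonneg)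
qed

lemma lp_norm_pos:
  assumes "x \<in> vecs N" and "x \<noteq> 0"
  shows "0 < lp_norm p N x"
proof -
  obtain i where "x i \<noteq> 0"
    using assms(2) by (auto simp: fun_eq_iff)
  moreover have "i < N"
    using assms(1) \<open>x i \<noteq> 0\<close> by (auto simp: vecs_def not_less[symmetric])
  ultimately have "0 < (\<Sum>i<N. \<bar>x i\<bar> powr p)"
    by (intro sum_pos2[of _ i]) auto
  then show ?thesis
    by (simp add: lp_norm_def)
qed

lemma lp_dist_zero:
  assumes "y \<in> F"
  shows "lp_dist p N y F = 0"
  unfolding lp_dist_def
proof (rule antisym)
  show "(INF z\<in>F. lp_norm p N (y - z)) \<le> 0"
    using assms by (intro cINF_lower2[OF _ assms]) (auto simp: lp_norm_def intro: bdd_belowI2[of _ 0])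
  show "0 \<le> (INF z\<in>F. lp_norm p N (y - z))"
    using assms by (intro cINF_greatest) (auto simp: lp_norm_def)
qed

lemma subspace_contains_normalized_vector_supported_in:
  assumes "p \<noteq> 0" and "F \<subseteq> vecs N" and "vs.subspace F" and "B \<subseteq> {..<N}"
    and "N < vs.dim F + card B"
  shows "\<exists>y\<in>F. lp_norm p N y = 1 \<and> supp N y \<subseteq> B"
proof -
  obtain x where x: "x \<in> F" "x \<noteq> 0" "\<And>i. i \<notin> B \<Longrightarrow> x i = 0"
    using subspace_meets_coordinate_subspace[OF assms(2-5)] by blast
  have pos: "0 < lp_norm p N x"
    using lp_norm_pos x(1,2) assms(2) by blast
  define y where "y = fscale (1 / lp_norm p N x) x"
  have "y \<in> F"
    unfolding y_def using vs.subspace_scale[OF assms(3) x(1)] .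
  moreover have "lp_norm p N y = 1"
    using pos by (simp add: y_def lp_norm_fscale[OF assms(1)])
  moreover have "supp N y \<subseteq> B"
    using x(3) by (auto simp: y_def supp_def fscale_def)
  ultimately show ?thesis by blast
qed

lemma disjoint_consecutive_blocks:
  fixes a b K :: nat
  assumes "a \<noteq> b"
  shows "{a * K..<Suc a * K} \<inter> {b * K..<Suc b * K} = {}"
proof -
  have "Suc a * K \<le> b * K" if "a < b" for a b
    using that by (metis Suc_leI mult_le_mono1)
  then show ?thesis
    using assms by (force simp: nat_neq_iff simp del: mult_Suc)
qed

lemma subspace_contains_disjointly_supported_normalized_vectors:
  assumes "p \<noteq> 0" and "F \<subseteq> vecs (l * Suc k)" and "vs.subspace F"
    and "l * Suc k \<le> vs.dim F + k"
  shows "\<exists>y. (\<forall>m<l. y m \<in> F \<and> lp_norm p (l * Suc k) (y m) = 1) \<and>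
    (\<forall>m<l. \<forall>n<l. m \<noteq> n \<longrightarrow> supp (l * Suc k) (y m) \<inter> supp (l * Suc k) (y n) = {})"
proof -
  have "\<exists>y\<in>F. lp_norm p (l * Suc k) y = 1 \<and> supp (l * Suc k) y \<subseteq> {m * Suc k..<Suc m * Suc k}"
    if "m < l" for m
  proof (rule subspace_contains_normalized_vector_supported_in[OF assms(1-3)])
    show "{m * Suc k..<Suc m * Suc k} \<subseteq> {..<l * Suc k}"
      using mult_le_mono1[of "Suc m" l "Suc k"] that by auto
    show "l * Suc k < vs.dim F + card {m * Suc k..<Suc m * Suc k}"
      using assms(4) by simp
  qed
  then obtain y where y: "\<And>m. m < l \<Longrightarrow> y m \<in> F \<and> lp_norm p (l * Suc k) (y m) = 1 \<and>
      supp (l * Suc k) (y m) \<subseteq> {m * Suc k..<Suc m * Suc k}"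
    by metis
  moreover have "supp (l * Suc k) (y m) \<inter> supp (l * Suc k) (y n) = {}"
    if "m < l" "n < l" "m \<noteq> n" for m n
    using y[OF that(1)] y[OF that(2)] disjoint_consecutive_blocks[OF that(3), of "Suc k"] by blast
  ultimately show ?thesis
    by blast
qed

theorem lemmaV2:
  fixes p \<epsilon> :: real and k l :: nat
  assumes "p \<ge> 1" and "\<epsilon> > 0" and "k \<ge> 1" and "l \<ge> 1"
  shows "\<exists>N::nat. N \<ge> 1 \<and>
    (\<forall>F. F \<subseteq> vecs N \<and> module.subspace fscale F \<and>
         int (vector_space.dim fscale F) \<ge> int N - int k \<longrightarrow>
      (\<exists>y :: nat \<Rightarrow> nat \<Rightarrow> real.
         (\<forall>j\<in>{1..l}. y j \<in> vecs N \<and> lp_norm p N (y j) = 1 \<and> lp_dist p N (y j) F \<le> \<epsilon>) \<and>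
         (\<forall>i\<in>{1..l}. \<forall>j\<in>{1..l}. i \<noteq> j \<longrightarrow> supp N (y i) \<inter> supp N (y j) = {})))"
proof (intro exI[of _ "l * Suc k"] conjI allI impI, goal_cases)
  case 1
  show ?case
    using assms(4) by simp
next
  case (2 F)
  then have F: "F \<subseteq> vecs (l * Suc k)" "vs.subspace F" "int (l * Suc k) - int k \<le> int (vs.dim F)"
    by blast+
  then have "l * Suc k \<le> vs.dim F + k"
    by linarith
  moreover have "p \<noteq> 0"
    using assms(1) by simp
  ultimately obtain y where
    y: "\<And>m. m < l \<Longrightarrow> y m \<in> F \<and> lp_norm p (l * Suc k) (y m) = 1" and
    disjoint: "\<And>m n. m < l \<Longrightarrow> n < l \<Longrightarrow> m \<noteq> n \<Longrightarrow>
      supp (l * Suc k) (y m) \<inter> supp (l * Suc k) (y n) = {}"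
    using subspace_contains_disjointly_supported_normalized_vectors F(1,2) by metis
  show ?case
  proof (intro exI[of _ "\<lambda>j. y (j - 1)"] conjI ballI impI)
    fix j assume "j \<in> {1..l}"
    then have "y (j - 1) \<in> F" "lp_norm p (l * Suc k) (y (j - 1)) = 1"
      using y[of "j - 1"] by auto
    then show "y (j - 1) \<in> vecs (l * Suc k)" "lp_norm p (l * Suc k) (y (j - 1)) = 1"
      "lp_dist p (l * Suc k) (y (j - 1)) F \<le> \<epsilon>"
      using F(1) assms(2) lp_dist_zero by auto
  next
    fix i j assume "i \<in> {1..l}" "j \<in> {1..l}" "i \<noteq> j"
    then show "supp (l * Suc k) (y (i - 1)) \<inter> supp (l * Suc k) (y (j - 1)) = {}"
      by (intro disjoint) auto
  qed
qed

end
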